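(* Consider the integer linear program in variables $\mathbf{c}=(c_1,\ldots,c_d)\in\mathbb{Z}^d$: $$\text{maximize } c_1+\cdots+c_d-1 \quad\text{subject to}\quad 0\le c_i\le nr\ (i\in[d]),\qquad \sum_{i\in S}c_i\le\sum_{\lambda\cap S\neq\emptyset}|N_\lambda|\ \ (S\subseteq[d]).$$ Let $\mathbf{c}^{(0)}=0\in\mathbb{Z}^d$. For $t=1,\ldots,r$, let $\mathbf{c}^{(t)}\in\mathbb{Z}^d$ satisfy the following, where $\mathbf{c}^{(t)}$ is always chosen to satisfy all constraints $\sum_{i\in S}c^{(t)}_i\le\sum_{\lambda\cap S\ne\emptyset}|N_\lambda|$: - $c_i^{(t-1)}\le c_i^{(t)}\le c_i^{(t-1)}+n$ for all $i\in[d]$; - whenever $c_i^{(t)}<c_i^{(t-1)}+n$, there exists $S\subseteq[d]$ with $i\in S$ and $\sum_{j\in S}c_j^{(t)}=\sum_{\lambda\cap S\neq\emptyset}|N_\lambda|$. Then $\mathbf{c}^{(r)}$ is an optimal solution of the integer linear program.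
   Context: Let $[d]=\{1,\ldots,d\}$, and let $n,r,d$ be positive integers. For a partition $\lambda$ of $d$ with at most $n$ parts, $N_\lambda$ is the set of index vectors $(i_1,\ldots,i_n)\in\mathbb{Z}_{\ge0}^n$ whose multiset of nonzero entries equals $\lambda$. The sum $\sum_{\lambda\cap S\neq\emptyset}$ ranges over the partitions $\lambda$ of $d$ of length at most $n$ having at least one part in $S$. *)

theory Defs
  imports Main "HOL-Library.Multiset"
begin

definition partitions_le :: "nat \<Rightarrow> nat \<Rightarrow> nat multiset set" where
  "partitions_le n d = {lam. (\<forall>x\<in>#lam. 0 < x) \<and> sum_mset lam = d \<and> size lam \<le> n}"

definition Nset :: "nat \<Rightarrow> nat multiset \<Rightarrow> nat list set" where
  "Nset n lam = {v. length v = n \<and> mset (filter (\<lambda>x. x \<noteq> 0) v) = lam}"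

definition rhs :: "nat \<Rightarrow> nat \<Rightarrow> nat set \<Rightarrow> int" where
  "rhs n d S = (\<Sum>lam\<in>{lam \<in> partitions_le n d. set_mset lam \<inter> S \<noteq> {}}. int (card (Nset n lam)))"

definition ilp_feasible :: "nat \<Rightarrow> nat \<Rightarrow> nat \<Rightarrow> (nat \<Rightarrow> int) \<Rightarrow> bool" where
  "ilp_feasible n r d c \<longleftrightarrow>
     (\<forall>i\<in>{1..d}. 0 \<le> c i \<and> c i \<le> int (n * r)) \<and>
     (\<forall>S. S \<subseteq> {1..d} \<longrightarrow> (\<Sum>i\<in>S. c i) \<le> rhs n d S)"

definition ilp_objective :: "nat \<Rightarrow> (nat \<Rightarrow> int) \<Rightarrow> int" where
  "ilp_objective d c = (\<Sum>i=1..d. c i) - 1"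

definition ilp_optimal :: "nat \<Rightarrow> nat \<Rightarrow> nat \<Rightarrow> (nat \<Rightarrow> int) \<Rightarrow> bool" where
  "ilp_optimal n r d c \<longleftrightarrow> ilp_feasible n r d c \<and>
     (\<forall>c'. ilp_feasible n r d c' \<longrightarrow> ilp_objective d c' \<le> ilp_objective d c)"

end

theory Submission
  imports Defs
begin

text \<open>The right-hand side is a coverage function of \<open>S\<close>, hence submodular, so the sets that are
  tight for the feasible vector \<open>c r\<close> are closed under union and there is a greatest tight set
  \<open>T\<close>. A coordinate \<open>i \<notin> T\<close> is never blocked: a set containing \<open>i\<close> that is tight at step \<open>t\<close>
  stays tight at step \<open>r\<close>, because the vectors only grow and \<open>c r\<close> is feasible. So
  \<open>c r i = n r\<close> outside \<open>T\<close>, while every feasible \<open>c'\<close> has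
  \<open>\<Sum>\<^sub>T c' \<le> rhs T = \<Sum>\<^sub>T c r\<close> and \<open>c' i \<le> n r\<close>.\<close>

definition submodular :: "('a set \<Rightarrow> 'b::ordered_ab_group_add) \<Rightarrow> bool" where
  "submodular f \<longleftrightarrow> (\<forall>A B. f (A \<union> B) + f (A \<inter> B) \<le> f A + f B)"

definition tight_sets :: "'a set \<Rightarrow> ('a set \<Rightarrow> 'b) \<Rightarrow> ('a \<Rightarrow> 'b::comm_monoid_add) \<Rightarrow> 'a set set" where
  "tight_sets I f x = {S. S \<subseteq> I \<and> sum x S = f S}"

lemma tight_sets_Un:
  fixes f :: "'a set \<Rightarrow> 'b::ordered_ab_group_add"
  assumes "submodular f" and "finite I"
    and feasible: "\<And>S. S \<subseteq> I \<Longrightarrow> sum x S \<le> f S"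
    and A: "A \<in> tight_sets I f x" and B: "B \<in> tight_sets I f x"
  shows "A \<union> B \<in> tight_sets I f x"
proof -
  have AB: "A \<subseteq> I" "B \<subseteq> I" "sum x A = f A" "sum x B = f B"
    using A B by (auto simp: tight_sets_def)
  then have "finite A" "finite B"
    using \<open>finite I\<close> finite_subset by auto
  have "f (A \<union> B) + sum x (A \<inter> B) \<le> f (A \<union> B) + f (A \<inter> B)"
    using AB by (intro add_left_mono feasible) auto
  also have "\<dots> \<le> f A + f B"
    using \<open>submodular f\<close> by (simp add: submodular_def)
  also have "\<dots> = sum x (A \<union> B) + sum x (A \<inter> B)"
    by (simp only: sum.union_inter[OF \<open>finite A\<close> \<open>finite B\<close>] AB(3,4))
  finally have "f (A \<union> B) \<le> sum x (A \<union> B)"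
    by simp
  with feasible[of "A \<union> B"] AB show ?thesis
    by (auto simp: tight_sets_def intro: order.antisym)
qed

lemma greatest_tight_set:
  fixes f :: "'a set \<Rightarrow> 'b::ordered_ab_group_add"
  assumes "submodular f" and "finite I" and "f {} = 0"
    and feasible: "\<And>S. S \<subseteq> I \<Longrightarrow> sum x S \<le> f S"
  obtains T where "T \<in> tight_sets I f x" and "\<And>S. S \<in> tight_sets I f x \<Longrightarrow> S \<subseteq> T"
proof -
  have "finite (tight_sets I f x)"
    using \<open>finite I\<close> by (auto simp: tight_sets_def intro: finite_subset[of _ "Pow I"])
  moreover have "{} \<in> tight_sets I f x"
    using \<open>f {} = 0\<close> by (simp add: tight_sets_def)
  ultimately obtain T where T: "T \<in> tight_sets I f x"
    and maximal: "\<forall>S \<in> tight_sets I f x. T \<subseteq> S \<longrightarrow> T = S"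
    using finite_has_maximal[of "tight_sets I f x"] by auto
  have "S \<subseteq> T" if "S \<in> tight_sets I f x" for S
    using maximal tight_sets_Un[OF assms(1,2) feasible that T] by blast
  with T show thesis
    using that by blast
qed

lemma sum_le_sum_if_tight_and_dominated:
  fixes f :: "'a set \<Rightarrow> 'b::ordered_ab_group_add"
  assumes "finite I" and T: "T \<in> tight_sets I f y"
    and feasible: "\<And>S. S \<subseteq> I \<Longrightarrow> sum x S \<le> f S"
    and dominated: "\<And>i. i \<in> I - T \<Longrightarrow> x i \<le> y i"
  shows "sum x I \<le> sum y I"
proof -
  have "T \<subseteq> I" and "sum y T = f T"
    using T by (auto simp: tight_sets_def)
  have "sum x I = sum x T + sum x (I - T)"
    using \<open>finite I\<close> \<open>T \<subseteq> I\<close> by (simp add: sum.subset_diff)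
  also have "\<dots> \<le> f T + sum y (I - T)"
    using \<open>T \<subseteq> I\<close> by (intro add_mono feasible sum_mono dominated)
  also have "\<dots> = sum y T + sum y (I - T)"
    by (simp add: \<open>sum y T = f T\<close>)
  also have "\<dots> = sum y I"
    using \<open>finite I\<close> \<open>T \<subseteq> I\<close> by (simp add: sum.subset_diff)
  finally show ?thesis .
qed

lemma steps_mono:
  fixes g :: "nat \<Rightarrow> 'b::preorder"
  assumes "\<And>t. t \<in> {1..r} \<Longrightarrow> g (t - 1) \<le> g t" and "s \<le> t" and "t \<le> r"
  shows "g s \<le> g t"
  using \<open>s \<le> t\<close> \<open>t \<le> r\<close>
proof (induction t rule: dec_induct)
  case (step t)
  then show ?case
    using assms(1)[of "Suc t"] order.trans by fastforce
qed simp

lemma steps_bounded: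
  fixes g :: "nat \<Rightarrow> int"
  assumes "\<And>t. t \<in> {1..r} \<Longrightarrow> g t \<le> g (t - 1) + a" and "t \<le> r"
  shows "g t \<le> g 0 + int t * a"
  using \<open>t \<le> r\<close>
proof (induction t)
  case (Suc t)
  then show ?case
    using assms(1)[of "Suc t"] by (simp add: algebra_simps)
qed simp

lemma steps_saturated_outside_greatest_tight_set:
  fixes c :: "nat \<Rightarrow> 'a \<Rightarrow> int"
  assumes step: "\<forall>t\<in>{1..r}. \<forall>i\<in>I. c (t - 1) i \<le> c t i \<and> c t i \<le> c (t - 1) i + a"
    and tight: "\<forall>t\<in>{1..r}. \<forall>i\<in>I. c t i < c (t - 1) i + a \<longrightarrow>
                  (\<exists>S. S \<subseteq> I \<and> i \<in> S \<and> sum (c t) S = f S)"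
    and feasible: "\<And>S. S \<subseteq> I \<Longrightarrow> sum (c r) S \<le> f S"
    and greatest: "\<And>S. S \<in> tight_sets I f (c r) \<Longrightarrow> S \<subseteq> T"
    and "t \<le> r" and i: "i \<in> I - T"
  shows "c t i = c 0 i + int t * a"
  using \<open>t \<le> r\<close>
proof (induction t)
  case (Suc t)
  have "c (Suc t) i = c t i + a"
  proof (rule ccontr)
    assume "c (Suc t) i \<noteq> c t i + a"
    moreover have t: "Suc t \<in> {1..r}"
      using Suc.prems by simp
    ultimately have "c (Suc t) i < c t i + a"
      using step[rule_format, OF t, of i] i by auto
    then have "\<exists>S. S \<subseteq> I \<and> i \<in> S \<and> sum (c (Suc t)) S = f S"
      using tight[rule_format, OF t, of i] i by simp
    then obtain S where S: "S \<subseteq> I" "i \<in> S" "sum (c (Suc t)) S = f S"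
      by blast
    have "c (Suc t) j \<le> c r j" if "j \<in> S" for j
    proof (rule steps_mono[where g = "\<lambda>t. c t j" and r = r])
      show "c (t' - 1) j \<le> c t' j" if "t' \<in> {1..r}" for t'
        using step S(1) \<open>j \<in> S\<close> that by blast
    qed (use Suc.prems in auto)
    then have "sum (c (Suc t)) S \<le> sum (c r) S"
      by (rule sum_mono)
    with S feasible[OF S(1)] have "S \<in> tight_sets I f (c r)"
      by (simp add: tight_sets_def)
    with greatest S(2) i show False
      by blast
  qed
  with Suc show ?case
    by (simp add: algebra_simps)
qed simp

lemma finite_partitions_le: "finite (partitions_le n d)"
proof -
  have "partitions_le n d \<subseteq> (\<Union>k\<le>n. multisets_of_size {0..d} k)"
  proof
    fix lam assume "lam \<in> partitions_le n d"
    then have "sum_mset lam = d" "size lam \<le> n"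
      by (auto simp: partitions_le_def)
    moreover have "x \<le> sum_mset lam" if "x \<in># lam" for x
      using multi_member_split[OF that] by auto
    ultimately show "lam \<in> (\<Union>k\<le>n. multisets_of_size {0..d} k)"
      by (auto simp: multisets_of_size_def)
  qed
  then show ?thesis
    by (rule finite_subset) auto
qed

lemma rhs_eq_sum_if:
  "rhs n d S = (\<Sum>lam\<in>partitions_le n d.
     if set_mset lam \<inter> S \<noteq> {} then int (card (Nset n lam)) else 0)"
  unfolding rhs_def using finite_partitions_le by (simp add: sum.inter_filter)

lemma rhs_empty: "rhs n d {} = 0"
  unfolding rhs_eq_sum_if by simp

lemma submodular_rhs: "submodular (rhs n d)"
  unfolding submodular_def rhs_eq_sum_if sum.distrib[symmetric]
  by (intro allI sum_mono) auto

theorem theorem5p4: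
  fixes n r d :: nat and c :: "nat \<Rightarrow> nat \<Rightarrow> int"
  assumes "0 < n" and "0 < r" and "0 < d"
    and init: "\<forall>i\<in>{1..d}. c 0 i = 0"
    and constr: "\<forall>t\<in>{1..r}. \<forall>S. S \<subseteq> {1..d} \<longrightarrow> (\<Sum>i\<in>S. c t i) \<le> rhs n d S"
    and step: "\<forall>t\<in>{1..r}. \<forall>i\<in>{1..d}. c (t - 1) i \<le> c t i \<and> c t i \<le> c (t - 1) i + int n"
    and tight: "\<forall>t\<in>{1..r}. \<forall>i\<in>{1..d}. c t i < c (t - 1) i + int n \<longrightarrow>
                  (\<exists>S. S \<subseteq> {1..d} \<and> i \<in> S \<and> (\<Sum>j\<in>S. c t j) = rhs n d S)"
  shows "ilp_optimal n r d (c r)"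
proof -
  have feasible_r: "\<And>S. S \<subseteq> {1..d} \<Longrightarrow> sum (c r) S \<le> rhs n d S"
    using constr \<open>0 < r\<close> by auto
  obtain T where T: "T \<in> tight_sets {1..d} (rhs n d) (c r)"
    and greatest: "\<And>S. S \<in> tight_sets {1..d} (rhs n d) (c r) \<Longrightarrow> S \<subseteq> T"
    using greatest_tight_set[OF submodular_rhs _ rhs_empty feasible_r] by blast
  have saturated: "c r i = int (n * r)" if "i \<in> {1..d} - T" for i
    using steps_saturated_outside_greatest_tight_set[OF step tight feasible_r greatest order.refl that]
      init that by simp
  have "0 \<le> c r i \<and> c r i \<le> int (n * r)" if i: "i \<in> {1..d}" for i
  proof -
    have "c 0 i \<le> c r i"
      by (rule steps_mono[where g = "\<lambda>t. c t i" and r = r]) (use step i in auto)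
    moreover have "c r i \<le> c 0 i + int r * int n"
      by (rule steps_bounded[where g = "\<lambda>t. c t i" and r = r]) (use step i in auto)
    ultimately show ?thesis
      using init i by (simp add: mult.commute)
  qed
  with feasible_r have "ilp_feasible n r d (c r)"
    by (simp add: ilp_feasible_def)
  moreover have "ilp_objective d c' \<le> ilp_objective d (c r)" if "ilp_feasible n r d c'" for c'
  proof -
    have "sum c' {1..d} \<le> sum (c r) {1..d}"
      by (rule sum_le_sum_if_tight_and_dominated[OF _ T])
        (use that saturated in \<open>auto simp: ilp_feasible_def mult.commute\<close>)
    then show ?thesis
      by (simp add: ilp_objective_def)
  qed
  ultimately show ?thesis
    by (simp add: ilp_optimal_def)
qed

end
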